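(* (1) If $k\ge1$ is odd, then $\omega\phi_k=\phi_k\omega$ and $\omega\psi^k=\psi^k\omega$ as operators on $\Lambda$. (2) If $1\le k<\ell$ are integers, then $\phi_{2^\ell}\,\omega\,\psi^{2^k}=\phi_{2^k}\,\omega\,\psi^{2^k}\,\phi_{2^{\ell-k}}$ as operators on $\Lambda$. (3) For any integer $\ell>0$ and any composition $\mu$ with $2^\ell$ dividing $|\mu|=\sum_i\mu_i$, we have $\phi_{2^\ell}\,\omega(h_\mu)=(-1)^{|\mu|/2^\ell}\,\omega\,\phi_{2^\ell}(h_\mu)$.
   Context: $\Lambda$ is the ring of symmetric functions over $\mathbb{C}(q)$ with the Hall inner product (Schur functions orthonormal). $\omega:\Lambda\to\Lambda$ is the ring involution with $\omega(e_n)=h_n$ (equivalently $\omega(p_n)=(-1)^{n-1}p_n$). For $k\ge1$, $\psi^k(F)(x_1,x_2,\dots)=F(x_1^k,x_2^k,\dots)$ and $\phi_k$ is the adjoint of $\psi^k$ for the Hall inner product. $h_\mu=\prod_i h_{\mu_i}$ is the complete homogeneous symmetric function of the composition $\mu$. *)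

theory Defs
  imports "HOL-Library.Poly_Mapping" "HOL-Library.Multiset"
          "HOL-Computational_Algebra.Polynomial" "HOL-Computational_Algebra.Fraction_Field"
begin

(* Ring of symmetric functions over C(q), presented (char 0) as the polynomial
   ring C(q)[p_1,p_2,...] in the power sums: an element is a finitely supported
   family of coefficients in the basis p_lambda, lambda a partition
   (finite multiset of positive integers). *)

typedef pnat = "{n::nat. 0 < n}" morphisms nat_of_pnat Abs_pnat by auto

type_synonym K = "complex poly fract"
type_synonym partition = "pnat multiset"
type_synonym sym = "partition \<Rightarrow>\<^sub>0 K"

(* power sum p_lambda; p_lambda * p_mu = p_(lambda+mu) by the convolution product *)
definition psum :: "partition \<Rightarrow> sym" where
  "psum lam = Poly_Mapping.single lam 1"

definition pn :: "nat \<Rightarrow> sym" where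
  "pn n = (if n = 0 then 1 else psum {#Abs_pnat n#})"

definition wt :: "partition \<Rightarrow> nat" where
  "wt lam = sum_mset (image_mset nat_of_pnat lam)"

definition zee :: "partition \<Rightarrow> nat" where
  "zee lam = (\<Prod>i\<in>set_mset lam. nat_of_pnat i ^ count lam i * fact (count lam i))"

definition hall :: "sym \<Rightarrow> sym \<Rightarrow> K" where
  "hall f g = (\<Sum>lam\<in>Poly_Mapping.keys f. Poly_Mapping.lookup f lam * Poly_Mapping.lookup g lam * of_nat (zee lam))"

definition alg_subst :: "(pnat \<Rightarrow> sym) \<Rightarrow> sym \<Rightarrow> sym" where
  "alg_subst g f = (\<Sum>lam\<in>Poly_Mapping.keys f. Poly_Mapping.single 0 (Poly_Mapping.lookup f lam) * prod_mset (image_mset g lam))"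

definition omega :: "sym \<Rightarrow> sym" where
  "omega = alg_subst (\<lambda>i. (-1) ^ (nat_of_pnat i - 1) * psum {#i#})"

(* psi^k(F)(x_1,x_2,...) = F(x_1^k,x_2^k,...): the algebra map p_n \<mapsto> p_(kn) *)
definition psi :: "nat \<Rightarrow> sym \<Rightarrow> sym" where
  "psi k = alg_subst (\<lambda>i. pn (k * nat_of_pnat i))"

definition phi :: "nat \<Rightarrow> sym \<Rightarrow> sym" where
  "phi k = (THE \<phi>. \<forall>f g. hall (psi k f) g = hall f (\<phi> g))"

definition hn :: "nat \<Rightarrow> sym" where
  "hn n = (\<Sum>lam\<in>{lam. wt lam = n}. Poly_Mapping.single lam (1 / of_nat (zee lam)))"

definition hcomp :: "nat list \<Rightarrow> sym" where
  "hcomp mu = prod_list (map hn mu)"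

end

theory Submission
  imports Defs
begin

text \<open>In the power-sum basis all operators involved act monomially: \<open>\<omega>\<close> multiplies
\<open>p\<^sub>\<lambda>\<close> by \<open>(-1)^(|\<lambda>| - \<ell>(\<lambda>))\<close>, \<open>\<psi>\<^sup>k\<close> sends \<open>p\<^sub>\<lambda>\<close> to \<open>p\<^sub>k\<^sub>\<lambda>\<close>, and its Hall adjoint \<open>\<phi>\<^sub>k\<close>
sends \<open>p\<^sub>k\<^sub>\<lambda>\<close> to \<open>k^\<ell>(\<lambda>) p\<^sub>\<lambda>\<close> and kills every \<open>p\<^sub>\<nu>\<close> with \<open>\<nu>\<close> not of the form \<open>k\<lambda>\<close>
(because \<open>z\<^sub>k\<^sub>\<lambda> = k^\<ell>(\<lambda>) z\<^sub>\<lambda>\<close>). Since \<open>|k\<lambda>| = k|\<lambda>|\<close> and \<open>\<ell>(k\<lambda>) = \<ell>(\<lambda>)\<close>, scaling by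
an odd \<open>k\<close> preserves the sign of \<open>\<omega>\<close>, while scaling by an even \<open>k\<close> turns it into
\<open>(-1)^\<ell>(\<lambda>)\<close>. Each identity then reduces to comparing the coefficient of a single
\<open>p\<^sub>\<lambda>\<close>; for (3) one also uses that \<open>h\<^sub>\<mu>\<close> is homogeneous of degree \<open>|\<mu>|\<close>, so that only
\<open>\<lambda>\<close> with \<open>2^l |\<lambda>| = |\<mu>|\<close> contribute.\<close>

definition scale_pnat :: "nat \<Rightarrow> pnat \<Rightarrow> pnat" where
  "scale_pnat k i = Abs_pnat (k * nat_of_pnat i)"

definition scale_partition :: "nat \<Rightarrow> partition \<Rightarrow> partition" where
  "scale_partition k = image_mset (scale_pnat k)"

definition omega_sign :: "partition \<Rightarrow> K" where
  "omega_sign lam = (-1) ^ (wt lam - size lam)"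

lemma nat_of_pnat_pos: "0 < nat_of_pnat i"
  using nat_of_pnat[of i] by simp

lemma nat_of_pnat_scale: "0 < k \<Longrightarrow> nat_of_pnat (scale_pnat k i) = k * nat_of_pnat i"
  unfolding scale_pnat_def using nat_of_pnat_pos[of i] by (simp add: Abs_pnat_inverse)

lemma inj_scale_pnat: "0 < k \<Longrightarrow> inj (scale_pnat k)"
  unfolding inj_def by (metis nat_of_pnat_scale mult_left_cancel not_gr0 nat_of_pnat_inject)

lemma inj_scale_partition: "0 < k \<Longrightarrow> inj (scale_partition k)"
  unfolding scale_partition_def by (rule multiset.inj_map[OF inj_scale_pnat])

lemma scale_partition_scale_partition:
  "0 < a \<Longrightarrow> 0 < b \<Longrightarrow> scale_partition a (scale_partition b lam) = scale_partition (a * b) lam"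
  unfolding scale_partition_def
  by (auto simp: multiset.map_comp nat_of_pnat_scale intro!: image_mset_cong nat_of_pnat_inject[THEN iffD1])

lemma size_scale_partition [simp]: "size (scale_partition k lam) = size lam"
  by (simp add: scale_partition_def)

lemma wt_empty [simp]: "wt {#} = 0"
  by (simp add: wt_def)

lemma wt_add_mset [simp]: "wt (add_mset i lam) = nat_of_pnat i + wt lam"
  by (simp add: wt_def)

lemma wt_union: "wt (lam + nu) = wt lam + wt nu"
  by (simp add: wt_def)

lemma wt_scale_partition: "0 < k \<Longrightarrow> wt (scale_partition k lam) = k * wt lam"
  unfolding wt_def scale_partition_def
  by (induct lam) (auto simp: nat_of_pnat_scale algebra_simps)

lemma size_le_wt: "size lam \<le> wt lam"
proof (induct lam)
  case (add i lam)
  then show ?case using nat_of_pnat_pos[of i] by simp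
qed simp

lemma omega_sign_iff_even: "omega_sign lam = (if even (wt lam + size lam) then 1 else -1)"
  using size_le_wt[of lam] unfolding omega_sign_def minus_one_power_iff
  by (auto simp: even_diff_nat)

lemma omega_sign_scale_odd: "odd k \<Longrightarrow> omega_sign (scale_partition k lam) = omega_sign lam"
  using odd_pos[of k] by (simp add: omega_sign_iff_even wt_scale_partition)

lemma omega_sign_scale_even:
  "even k \<Longrightarrow> 0 < k \<Longrightarrow> omega_sign (scale_partition k lam) = (-1) ^ size lam"
  by (simp add: omega_sign_iff_even wt_scale_partition minus_one_power_iff)

lemma zee_pos: "0 < zee lam"
  unfolding zee_def using nat_of_pnat_pos by (auto intro!: prod_pos)

lemma count_image_mset_inj: "inj f \<Longrightarrow> count (image_mset f M) (f x) = count M x"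
proof -
  assume "inj f"
  then have "f -` {f x} = {x}" by (auto simp: inj_eq)
  then show ?thesis by (cases "x \<in># M") (auto simp: count_image_mset count_eq_zero_iff)
qed

lemma zee_scale_partition: "0 < k \<Longrightarrow> zee (scale_partition k lam) = k ^ size lam * zee lam"
proof -
  assume k: "0 < k"
  have "zee (scale_partition k lam)
      = (\<Prod>i\<in>set_mset lam. (k * nat_of_pnat i) ^ count lam i * fact (count lam i))"
    unfolding zee_def scale_partition_def using inj_scale_pnat[OF k]
    by (simp add: prod.reindex count_image_mset_inj nat_of_pnat_scale[OF k] inj_on_subset)
  also have "\<dots> = (\<Prod>i\<in>set_mset lam. k ^ count lam i) * zee lam"
    unfolding zee_def by (simp add: power_mult_distrib prod.distrib mult.assoc)
  also have "(\<Prod>i\<in>set_mset lam. k ^ count lam i) = k ^ size lam"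
    by (simp add: power_sum[symmetric] size_multiset_overloaded_eq)
  finally show ?thesis .
qed

lemma minus_one_power_sym: "(-1::sym) ^ m = Poly_Mapping.single 0 ((-1) ^ m)"
  by (induct m) (simp_all add: mult_single single_uminus)

lemma lookup_minus_one_power_mult:
  "Poly_Mapping.lookup ((-1) ^ m * (f::sym)) lam = (-1) ^ m * Poly_Mapping.lookup f lam"
  unfolding minus_one_power_sym
  by (simp flip: mult_map_scale_conv_mult add: Poly_Mapping.map.rep_eq when_def)

locale monomial_subst =
  fixes g :: "pnat \<Rightarrow> sym" and s :: "partition \<Rightarrow> partition" and c :: "partition \<Rightarrow> K"
  assumes prod_image_mset: "prod_mset (image_mset g lam) = Poly_Mapping.single (s lam) (c lam)"
    and inj_s: "inj s"
begin

lemma alg_subst_eq: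
  "alg_subst g f = (\<Sum>lam\<in>Poly_Mapping.keys f.
     Poly_Mapping.single (s lam) (Poly_Mapping.lookup f lam * c lam))"
  unfolding alg_subst_def prod_image_mset by (simp add: mult_single)

lemma lookup_alg_subst:
  "Poly_Mapping.lookup (alg_subst g f) (s lam) = Poly_Mapping.lookup f lam * c lam"
  unfolding alg_subst_eq
  by (cases "lam \<in> Poly_Mapping.keys f")
     (auto simp: lookup_sum lookup_single when_def inj_eq[OF inj_s] in_keys_iff cong: if_cong)

lemma lookup_alg_subst_notin_range:
  "nu \<notin> range s \<Longrightarrow> Poly_Mapping.lookup (alg_subst g f) nu = 0"
  unfolding alg_subst_eq by (auto simp: lookup_sum lookup_single when_def intro!: sum.neutral)

end

lemma prod_omega_generators:
  "prod_mset (image_mset (\<lambda>i. (-1) ^ (nat_of_pnat i - 1) * psum {#i#}) lam)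
     = Poly_Mapping.single lam (omega_sign lam)"
proof (induct lam)
  case empty
  then show ?case by (simp add: omega_sign_def)
next
  case (add i lam)
  have "nat_of_pnat i + wt lam - Suc (size lam) = (nat_of_pnat i - 1) + (wt lam - size lam)"
    using nat_of_pnat_pos[of i] size_le_wt[of lam] by arith
  then have sign: "omega_sign (add_mset i lam) = (-1) ^ (nat_of_pnat i - 1) * omega_sign lam"
    by (simp add: omega_sign_def power_add)
  have "prod_mset (image_mset (\<lambda>i. (-1) ^ (nat_of_pnat i - 1) * psum {#i#}) (add_mset i lam))
      = ((-1) ^ (nat_of_pnat i - 1) * psum {#i#}) * Poly_Mapping.single lam (omega_sign lam)"
    by (simp only: image_mset_add_mset prod_mset.add_mset add)
  also have "\<dots> = Poly_Mapping.single (add_mset i lam) (omega_sign (add_mset i lam))"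
    by (simp add: minus_one_power_sym psum_def mult_single sign)
  finally show ?case .
qed

interpretation omega: monomial_subst "\<lambda>i. (-1) ^ (nat_of_pnat i - 1) * psum {#i#}" id omega_sign
  by unfold_locales (simp_all only: id_apply prod_omega_generators inj_on_id)

lemma lookup_omega: "Poly_Mapping.lookup (omega f) lam = Poly_Mapping.lookup f lam * omega_sign lam"
  using omega.lookup_alg_subst[of f lam] by (simp add: omega_def)

lemma monomial_subst_psi:
  assumes k: "0 < k"
  shows "monomial_subst (\<lambda>i. pn (k * nat_of_pnat i)) (scale_partition k) (\<lambda>_. 1)"
proof
  show "inj (scale_partition k)" using inj_scale_partition[OF k] .
  fix lam
  show "prod_mset (image_mset (\<lambda>i. pn (k * nat_of_pnat i)) lam)
      = Poly_Mapping.single (scale_partition k lam) 1"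
  proof (induct lam)
    case (add i lam)
    have generator: "pn (k * nat_of_pnat i) = psum {#scale_pnat k i#}"
      using k nat_of_pnat_pos[of i] by (simp add: pn_def scale_pnat_def)
    have "prod_mset (image_mset (\<lambda>i. pn (k * nat_of_pnat i)) (add_mset i lam))
        = pn (k * nat_of_pnat i) * Poly_Mapping.single (scale_partition k lam) 1"
      by (simp only: image_mset_add_mset prod_mset.add_mset add)
    also have "\<dots> = Poly_Mapping.single (scale_partition k (add_mset i lam)) 1"
      by (simp add: generator psum_def mult_single scale_partition_def)
    finally show ?case .
  qed (simp add: scale_partition_def)
qed

lemma lookup_psi_scale:
  "0 < k \<Longrightarrow> Poly_Mapping.lookup (psi k f) (scale_partition k lam) = Poly_Mapping.lookup f lam"
  using monomial_subst.lookup_alg_subst[OF monomial_subst_psi] by (simp add: psi_def)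

lemma lookup_psi_notin_range:
  "0 < k \<Longrightarrow> nu \<notin> range (scale_partition k) \<Longrightarrow> Poly_Mapping.lookup (psi k f) nu = 0"
  using monomial_subst.lookup_alg_subst_notin_range[OF monomial_subst_psi] by (simp add: psi_def)

lemma keys_psi: "0 < k \<Longrightarrow> Poly_Mapping.keys (psi k f) = scale_partition k ` Poly_Mapping.keys f"
proof -
  assume k: "0 < k"
  have "nu \<in> scale_partition k ` Poly_Mapping.keys f" if "Poly_Mapping.lookup (psi k f) nu \<noteq> 0" for nu
  proof -
    from that lookup_psi_notin_range[OF k, of nu f] obtain lam where "nu = scale_partition k lam"
      by auto
    with that k show ?thesis by (auto simp: lookup_psi_scale in_keys_iff)
  qed
  with k show ?thesis by (auto simp: in_keys_iff lookup_psi_scale)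
qed

definition psi_adjoint :: "nat \<Rightarrow> sym \<Rightarrow> sym" where
  "psi_adjoint k g = Abs_poly_mapping
     (\<lambda>lam. of_nat k ^ size lam * Poly_Mapping.lookup g (scale_partition k lam))"

lemma lookup_psi_adjoint:
  assumes k: "0 < k"
  shows "Poly_Mapping.lookup (psi_adjoint k g) lam
    = of_nat k ^ size lam * Poly_Mapping.lookup g (scale_partition k lam)"
proof -
  have "finite (scale_partition k -` {nu. Poly_Mapping.lookup g nu \<noteq> 0})"
    using inj_scale_partition[OF k] by (intro finite_vimageI) auto
  then have "finite {lam. of_nat k ^ size lam * Poly_Mapping.lookup g (scale_partition k lam) \<noteq> 0}"
    by (rule finite_subset[rotated]) auto
  then show ?thesis
    unfolding psi_adjoint_def by (simp add: lookup_Abs_poly_mapping)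
qed

lemma of_nat_K_neq_0: "0 < n \<Longrightarrow> (of_nat n :: K) \<noteq> 0"
  by (simp add: of_nat_fract Zero_fract_def eq_fract)

lemma hall_single_left: "hall (Poly_Mapping.single lam 1) g = Poly_Mapping.lookup g lam * of_nat (zee lam)"
  by (simp add: hall_def)

lemma hall_psi: "0 < k \<Longrightarrow> hall (psi k f) g = hall f (psi_adjoint k g)"
proof -
  assume k: "0 < k"
  have "hall (psi k f) g = (\<Sum>lam\<in>Poly_Mapping.keys f. Poly_Mapping.lookup f lam
      * Poly_Mapping.lookup g (scale_partition k lam) * of_nat (zee (scale_partition k lam)))"
    unfolding hall_def keys_psi[OF k] using inj_scale_partition[OF k]
    by (simp add: sum.reindex inj_on_subset lookup_psi_scale[OF k])
  also have "\<dots> = hall f (psi_adjoint k g)"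
    unfolding hall_def by (simp add: lookup_psi_adjoint[OF k] zee_scale_partition[OF k] mult_ac)
  finally show ?thesis .
qed

lemma phi_eq_psi_adjoint:
  assumes k: "0 < k"
  shows "phi k = psi_adjoint k"
  unfolding phi_def
proof (rule the_equality)
  show "\<forall>f g. hall (psi k f) g = hall f (psi_adjoint k g)"
    using hall_psi[OF k] by blast
next
  fix \<phi> assume adjoint: "\<forall>f g. hall (psi k f) g = hall f (\<phi> g)"
  show "\<phi> = psi_adjoint k"
  proof (intro ext poly_mapping_eqI)
    fix g lam
    have "hall (Poly_Mapping.single lam 1) (\<phi> g) = hall (Poly_Mapping.single lam 1) (psi_adjoint k g)"
      using adjoint hall_psi[OF k] by metis
    then show "Poly_Mapping.lookup (\<phi> g) lam = Poly_Mapping.lookup (psi_adjoint k g) lam"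
      using of_nat_K_neq_0[OF zee_pos[of lam]] by (simp add: hall_single_left)
  qed
qed

lemma lookup_phi:
  "0 < k \<Longrightarrow> Poly_Mapping.lookup (phi k g) lam
    = of_nat k ^ size lam * Poly_Mapping.lookup g (scale_partition k lam)"
  by (simp add: phi_eq_psi_adjoint lookup_psi_adjoint)

lemma keys_hn: "Poly_Mapping.keys (hn n) \<subseteq> {lam. wt lam = n}"
  unfolding hn_def
  using keys_sum[of "\<lambda>lam. Poly_Mapping.single lam (1 / of_nat (zee lam))" "{lam. wt lam = n}"]
  by (auto split: if_splits)

lemma keys_hcomp: "Poly_Mapping.keys (hcomp mu) \<subseteq> {lam. wt lam = sum_list mu}"
proof (induct mu)
  case Nil
  then show ?case by (simp add: hcomp_def)
next
  case (Cons n mu)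
  have "hcomp (n # mu) = hn n * hcomp mu" by (simp add: hcomp_def)
  then show ?case
    using keys_mult[of "hn n" "hcomp mu"] keys_hn[of n] Cons by (force simp: wt_union)
qed

lemma omega_phi_commute_odd: "odd k \<Longrightarrow> omega \<circ> phi k = phi k \<circ> omega"
  using odd_pos
  by (intro ext poly_mapping_eqI) (simp add: lookup_omega lookup_phi omega_sign_scale_odd)

lemma omega_psi_commute_odd:
  assumes "odd k"
  shows "omega \<circ> psi k = psi k \<circ> omega"
proof (intro ext poly_mapping_eqI)
  fix f nu
  have k: "0 < k" using assms odd_pos by blast
  show "Poly_Mapping.lookup ((omega \<circ> psi k) f) nu = Poly_Mapping.lookup ((psi k \<circ> omega) f) nu"
  proof (cases "nu \<in> range (scale_partition k)")
    case True
    then obtain lam where "nu = scale_partition k lam" by auto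
    then show ?thesis
      using k assms by (simp add: lookup_omega lookup_psi_scale omega_sign_scale_odd)
  next
    case False
    then show ?thesis using k by (simp add: lookup_omega lookup_psi_notin_range)
  qed
qed

lemma phi_omega_psi_power2:
  assumes "1 \<le> k" "k < l"
  shows "phi (2^l) \<circ> omega \<circ> psi (2^k) = phi (2^k) \<circ> omega \<circ> psi (2^k) \<circ> phi (2^(l-k))"
proof (intro ext poly_mapping_eqI)
  fix f lam
  have split_nat: "(2::nat) ^ l = 2 ^ k * 2 ^ (l - k)" and split_K: "(2::K) ^ l = 2 ^ k * 2 ^ (l - k)"
    using assms by (simp_all flip: power_add)
  have scale_l: "scale_partition (2^l) lam = scale_partition (2^k) (scale_partition (2^(l-k)) lam)"
    by (simp add: scale_partition_scale_partition split_nat)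
  have "Poly_Mapping.lookup ((phi (2^l) \<circ> omega \<circ> psi (2^k)) f) lam
      = (2^l) ^ size lam * (Poly_Mapping.lookup f (scale_partition (2^(l-k)) lam) * (-1) ^ size lam)"
    using assms by (simp add: lookup_phi lookup_omega omega_sign_scale_even scale_l lookup_psi_scale)
  also have "\<dots> = Poly_Mapping.lookup ((phi (2^k) \<circ> omega \<circ> psi (2^k) \<circ> phi (2^(l-k))) f) lam"
    using assms
    by (simp add: lookup_phi lookup_omega lookup_psi_scale omega_sign_scale_even split_K
        power_mult_distrib mult_ac)
  finally show "Poly_Mapping.lookup ((phi (2^l) \<circ> omega \<circ> psi (2^k)) f) lam
      = Poly_Mapping.lookup ((phi (2^k) \<circ> omega \<circ> psi (2^k) \<circ> phi (2^(l-k))) f) lam" .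
qed

lemma phi_omega_hcomp_power2:
  assumes "0 < l" "2^l dvd sum_list mu"
  shows "phi (2^l) (omega (hcomp mu)) = (-1) ^ (sum_list mu div 2^l) * omega (phi (2^l) (hcomp mu))"
proof (rule poly_mapping_eqI)
  fix lam
  let ?c = "Poly_Mapping.lookup (hcomp mu) (scale_partition (2^l) lam)"
  have sign: "omega_sign (scale_partition (2^l) lam) = (-1) ^ (sum_list mu div 2^l) * omega_sign lam"
    if "?c \<noteq> 0"
  proof -
    from that keys_hcomp[of mu] have "wt (scale_partition (2^l) lam) = sum_list mu"
      by (auto simp: in_keys_iff)
    then have "wt lam = sum_list mu div 2^l"
      by (simp add: wt_scale_partition flip: \<open>wt (scale_partition (2^l) lam) = sum_list mu\<close>)
    moreover have "omega_sign (scale_partition (2^l) lam) = (-1) ^ size lam"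
      using assms(1) by (intro omega_sign_scale_even) simp_all
    ultimately show ?thesis
      by (simp add: omega_sign_iff_even minus_one_power_iff)
  qed
  show "Poly_Mapping.lookup (phi (2^l) (omega (hcomp mu))) lam
      = Poly_Mapping.lookup ((-1) ^ (sum_list mu div 2^l) * omega (phi (2^l) (hcomp mu))) lam"
    unfolding lookup_minus_one_power_mult using sign
    by (cases "?c = 0") (simp_all add: lookup_omega lookup_phi mult_ac)
qed

theorem lemma2p3:
  shows "(\<forall>k::nat. odd k \<longrightarrow>
            omega \<circ> phi k = phi k \<circ> omega \<and> omega \<circ> psi k = psi k \<circ> omega)
       \<and> (\<forall>k l :: nat. 1 \<le> k \<and> k < l \<longrightarrow>
            phi (2^l) \<circ> omega \<circ> psi (2^k)
              = phi (2^k) \<circ> omega \<circ> psi (2^k) \<circ> phi (2^(l-k)))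
       \<and> (\<forall>(l::nat) (mu::nat list). 0 < l \<and> (\<forall>i\<in>set mu. 0 < i) \<and> 2^l dvd sum_list mu \<longrightarrow>
            phi (2^l) (omega (hcomp mu))
              = (-1) ^ (sum_list mu div 2^l) * omega (phi (2^l) (hcomp mu)))"
  using omega_phi_commute_odd omega_psi_commute_odd phi_omega_psi_power2 phi_omega_hcomp_power2
  by blast

end
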